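(* Let \(1 \le \ell < n\) be positive integers. Then \[ {}_2F_2\left(\begin{matrix} \frac{n-1}{n}\ell + 1, & 1 \\ \ell+2, & \frac{n-1}{n}\ell+3 \end{matrix}\,;\, \frac{\ell}{n}\right) = (\ell+1)!\,\frac{n^{\ell+1}}{\ell^{\ell+1}}\,\frac{\Gamma\!\left(\frac{n-1}{n}\ell+3\right)}{\Gamma\!\left(\frac{n-1}{n}\ell+1\right)}\left[\frac{n}{\ell}\left(\sum_{k=0}^{\ell}\frac{\ell^k}{k!\,n^k} - e^{\ell/n}\right) + \frac{\ell^{\ell-1}}{(\ell-1)!\,n^{\ell-1}}\cdot\frac{1}{(n+1)(\ell+1)-1-2\ell}\right]. \]
   Context: \({}_pF_q\) denotes the generalized hypergeometric series and \(\Gamma\) the Gamma function. This special value is used to evaluate, via Waadeland's tail theorem, the continued fraction whose partial numerators are \(-z(m+nz)\) and partial denominators \(m+(n+1)z+2\), at \(z=\ell/n\). *)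

theory Defs
  imports "HOL-Analysis.Analysis"
begin

definition hypergeometric :: "real list \<Rightarrow> real list \<Rightarrow> real \<Rightarrow> real" where
  "hypergeometric as bs z =
     (\<Sum>k. (\<Prod>a\<leftarrow>as. pochhammer a k) / (\<Prod>b\<leftarrow>bs. pochhammer b k) * z ^ k / fact k)"

end

theory Submission
  imports Defs
begin

(* Put z = l/n and a = l + 1 - z. Since (a)_k/(a+2)_k = a(a+1)/((a+k)(a+k+1)) and
   (l+2)_k = (l+1+k)!/(l+1)!, the k-th term of the series is, up to the constant
   a(a+1)(l+1)!/z^(l+1), the quantity z^(N+1)/((N+1)! (N+1-z)(N+2-z)) with N = l + k.
   A partial fraction decomposition writes this as v N - v (N+1) - z^N/(N+1)! with
   v N = z^N/(N! (N+1-z)): the first part telescopes to v l, the second is a tail of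
   the exponential series, (e^z - sum_{k<=l} z^k/k!)/z. The Gamma quotient is (a)_2. *)

lemma pochhammer_times_shift_two:
  fixes a :: "'a::comm_semiring_1"
  shows "pochhammer a k * ((a + of_nat k) * (a + of_nat k + 1)) = a * (a + 1) * pochhammer (a + 2) k"
proof -
  have two: "pochhammer x 2 = x * (x + 1)" for x :: 'a
    by (simp add: numeral_2_eq_2 pochhammer_Suc)
  have "pochhammer a k * pochhammer (a + of_nat k) 2 = pochhammer a 2 * pochhammer (a + 2) k"
    using pochhammer_product'[of a k 2] pochhammer_product'[of a 2 k] by (simp add: add.commute)
  then show ?thesis by (simp only: two)
qed

lemma fact_add_eq_fact_mult_pochhammer:
  "fact (m + k) = (fact m :: 'a::{comm_semiring_1,semiring_char_0}) * pochhammer (of_nat m + 1) k"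
  using pochhammer_product'[of 1 m k] by (simp add: pochhammer_fact add.commute)

lemma exp_series_tail_sums:
  fixes z :: real
  assumes "z \<noteq> 0"
  shows "(\<lambda>k. z ^ (l + k) / fact (l + k + 1)) sums ((exp z - (\<Sum>k\<le>l. z ^ k / fact k)) / z)"
proof -
  have "(\<lambda>k. z ^ k / fact k) sums ((exp z - (\<Sum>k\<le>l. z ^ k / fact k)) + (\<Sum>k<l + 1. z ^ k / fact k))"
    using exp_converges[of z] by (simp add: divide_inverse mult.commute lessThan_Suc_atMost)
  then have "(\<lambda>k. z ^ (k + (l + 1)) / fact (k + (l + 1))) sums (exp z - (\<Sum>k\<le>l. z ^ k / fact k))"
    by (subst sums_iff_shift)
  then have "(\<lambda>k. z ^ (k + (l + 1)) / fact (k + (l + 1)) / z) sums ((exp z - (\<Sum>k\<le>l. z ^ k / fact k)) / z)"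
    by (rule sums_divide)
  moreover have "z ^ (k + (l + 1)) / fact (k + (l + 1)) / z = z ^ (l + k) / fact (l + k + 1)" for k
    using assms by (simp add: ac_simps)
  ultimately show ?thesis
    by simp
qed

lemma power_over_fact_partial_fractions:
  fixes z :: real and N :: nat
  assumes "z \<noteq> real N + 1" "z \<noteq> real N + 2"
  shows "z ^ (N + 1) / (fact (N + 1) * (real N + 1 - z) * (real N + 2 - z))
       = z ^ N / (fact N * (real N + 1 - z)) - z ^ (N + 1) / (fact (N + 1) * (real N + 2 - z))
         - z ^ N / fact (N + 1)"
proof -
  have partial_fractions: "z * p / (m * f * (m - z) * (m + 1 - z))
      = p / (f * (m - z)) - z * p / (m * f * (m + 1 - z)) - p / (m * f)"
    if "m - z \<noteq> 0" "m + 1 - z \<noteq> 0" "m \<noteq> 0" "f \<noteq> 0" for m p f :: real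
  proof -
    have "m * f * (m - z) * (m + 1 - z) \<noteq> 0" "f * (m - z) \<noteq> 0" "m * f * (m + 1 - z) \<noteq> 0"
      "m * f \<noteq> 0"
      using that by auto
    then show ?thesis
      by (simp add: divide_simps) (simp add: algebra_simps)
  qed
  have "real N + 1 + 1 = real N + 2" "fact (N + 1) = (real N + 1) * fact N" "z ^ (N + 1) = z * z ^ N"
    by simp_all
  with partial_fractions[of "real N + 1" "fact N" "z ^ N"] assms show ?thesis
    by (simp only:) (simp add: mult_ac)
qed

lemma hypergeometric_2F2_term_eq:
  fixes z :: real and l k :: nat
  assumes "z \<noteq> 0" "z < real l + 1"
  defines "a \<equiv> real l + 1 - z"
  shows "(\<Prod>x\<leftarrow>[a, 1]. pochhammer x k) / (\<Prod>x\<leftarrow>[real l + 2, a + 2]. pochhammer x k) * z ^ k / fact k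
       = a * (a + 1) * fact (l + 1) / z ^ (l + 1)
         * (z ^ (l + k + 1) / (fact (l + k + 1) * (real (l + k) + 1 - z) * (real (l + k) + 2 - z)))"
proof -
  define D where "D = (real (l + k) + 1 - z) * (real (l + k) + 2 - z)"
  have "a > 0" "D > 0"
    using assms unfolding a_def D_def by simp_all
  then have "pochhammer (a + 2) k > 0"
    by (intro pochhammer_pos) simp
  have "(of_nat (l + 1) + 1 :: real) = real l + 2"
    by simp
  then have fact_eq: "fact (l + k + 1) = fact (l + 1) * pochhammer (real l + 2) k"
    using fact_add_eq_fact_mult_pochhammer[of "l + 1" k, where 'a = real] by (simp add: add_ac)
  have "D = (a + real k) * (a + real k + 1)"
    unfolding a_def D_def by (simp add: algebra_simps)
  then have "pochhammer a k * D = a * (a + 1) * pochhammer (a + 2) k"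
    using pochhammer_times_shift_two[of a k] by simp
  then have pochhammer_eq: "pochhammer a k = a * (a + 1) * pochhammer (a + 2) k / D"
    using \<open>D > 0\<close> by (simp add: field_simps)
  have "z ^ (l + k + 1) = z ^ (l + 1) * z ^ k"
    by (simp add: power_add)
  with fact_eq pochhammer_eq \<open>pochhammer (a + 2) k > 0\<close> \<open>D > 0\<close> assms(1) show ?thesis
    by (simp add: pochhammer_fact[symmetric] D_def)
qed

lemma hypergeometric_2F2_closed_form:
  fixes z :: real and l :: nat
  assumes "z \<noteq> 0" "z < real l + 1"
  defines "a \<equiv> real l + 1 - z"
  shows "hypergeometric [a, 1] [real l + 2, a + 2] z
       = a * (a + 1) * fact (l + 1) / z ^ (l + 1)
         * (z ^ l / (fact l * (real l + 1 - z)) - (exp z - (\<Sum>k\<le>l. z ^ k / fact k)) / z)"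
proof -
  define v where "v N = z ^ N / (fact N * (real N + 1 - z))" for N
  define C where "C = a * (a + 1) * fact (l + 1) / z ^ (l + 1)"
  have "(\<lambda>N. z ^ N / fact N) \<longlonglongrightarrow> 0"
    using summable_LIMSEQ_zero[OF summable_exp[of z]] by (simp add: field_simps)
  moreover have "(\<lambda>N. inverse ((1 - z) + real N)) \<longlonglongrightarrow> 0"
    using filterlim_tendsto_add_at_top[OF tendsto_const filterlim_real_sequentially]
    by (rule tendsto_inverse_0_at_top)
  ultimately have "(\<lambda>N. z ^ N / fact N * inverse ((1 - z) + real N)) \<longlonglongrightarrow> 0"
    using tendsto_mult by fastforce
  moreover have "v = (\<lambda>N. z ^ N / fact N * inverse ((1 - z) + real N))"
    unfolding v_def by (simp add: fun_eq_iff divide_inverse ac_simps)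
  ultimately have "v \<longlonglongrightarrow> 0"
    by simp
  then have "(\<lambda>k. v (l + k) - v (Suc (l + k))) sums v l"
    using telescope_sums'[OF LIMSEQ_ignore_initial_segment[of v 0 l]] by (simp add: add.commute)
  from sums_mult[OF sums_diff[OF this exp_series_tail_sums[OF assms(1)]], of C]
  have "(\<lambda>k. C * (v (l + k) - v (Suc (l + k)) - z ^ (l + k) / fact (l + k + 1)))
        sums (C * (v l - (exp z - (\<Sum>k\<le>l. z ^ k / fact k)) / z))" .
  moreover have "(\<Prod>x\<leftarrow>[a, 1]. pochhammer x k) / (\<Prod>x\<leftarrow>[real l + 2, a + 2]. pochhammer x k) * z ^ k / fact k
      = C * (v (l + k) - v (Suc (l + k)) - z ^ (l + k) / fact (l + k + 1))" for k
  proof -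
    have "z \<noteq> real (l + k) + 1" "z \<noteq> real (l + k) + 2"
      using assms(2) by simp_all
    have v_Suc: "v (Suc (l + k)) = z ^ (l + k + 1) / (fact (l + k + 1) * (real (l + k) + 2 - z))"
      unfolding v_def by simp
    have "(\<Prod>x\<leftarrow>[a, 1]. pochhammer x k) / (\<Prod>x\<leftarrow>[real l + 2, a + 2]. pochhammer x k) * z ^ k / fact k
        = C * (z ^ (l + k + 1) / (fact (l + k + 1) * (real (l + k) + 1 - z) * (real (l + k) + 2 - z)))"
      using hypergeometric_2F2_term_eq[OF assms(1,2), of k] unfolding a_def C_def .
    also have "\<dots> = C * (v (l + k) - v (Suc (l + k)) - z ^ (l + k) / fact (l + k + 1))"
      unfolding v_Suc v_def[of "l + k"]
        power_over_fact_partial_fractions[OF \<open>z \<noteq> real (l + k) + 1\<close> \<open>z \<noteq> real (l + k) + 2\<close>] ..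
    finally show ?thesis .
  qed
  ultimately show ?thesis
    unfolding hypergeometric_def C_def v_def by (simp add: sums_iff)
qed

lemma Gamma_add_two_div_Gamma:
  fixes a :: real
  assumes "a \<notin> \<int>\<^sub>\<le>\<^sub>0"
  shows "Gamma (a + 2) / Gamma a = a * (a + 1)"
  using pochhammer_Gamma[OF assms, of 2] by (simp add: numeral_2_eq_2 pochhammer_Suc)

lemma power_div_fact_boundary_term_eq:
  fixes l n :: nat
  assumes "1 \<le> l" "0 < n"
  defines "z \<equiv> real l / real n"
  shows "real l ^ (l - 1) / (fact (l - 1) * real n ^ (l - 1))
           * (1 / ((real n + 1) * (real l + 1) - 1 - 2 * real l))
       = z ^ l / (fact l * (real l + 1 - z))"
proof -
  obtain j where j: "l = Suc j"
    using assms by (cases l) auto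
  have "(real n + 1) * (real l + 1) - 1 - 2 * real l = real n * (real l + 1 - z)"
    unfolding z_def using assms by (simp add: field_simps)
  moreover have "real l ^ (l - 1) / (fact (l - 1) * real n ^ (l - 1)) = z ^ j / fact j"
    unfolding z_def j by (simp add: power_divide)
  ultimately have "real l ^ (l - 1) / (fact (l - 1) * real n ^ (l - 1))
      * (1 / ((real n + 1) * (real l + 1) - 1 - 2 * real l)) = z ^ j / fact j / real n / (real l + 1 - z)"
    by simp
  also have "z ^ j / fact j / real n = z ^ l / fact l"
  proof -
    have "z / real l = 1 / real n"
      unfolding z_def using assms by simp
    moreover have "z ^ l / fact l = z ^ j / fact j * (z / real l)"
      unfolding j by (simp add: field_simps)
    ultimately show ?thesis
      by simp
  qed
  finally show ?thesis
    by simp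
qed

theorem lemma4p2:
  fixes l n :: nat
  assumes "1 \<le> l" and "l < n"
  shows "hypergeometric [(real n - 1) / real n * real l + 1, 1]
                        [real l + 2, (real n - 1) / real n * real l + 3] (real l / real n)
       = fact (l + 1) * real n ^ (l + 1) / real l ^ (l + 1)
         * (Gamma ((real n - 1) / real n * real l + 3) / Gamma ((real n - 1) / real n * real l + 1))
         * (real n / real l * ((\<Sum>k=0..l. real l ^ k / (fact k * real n ^ k)) - exp (real l / real n))
            + real l ^ (l - 1) / (fact (l - 1) * real n ^ (l - 1))
              * (1 / ((real n + 1) * (real l + 1) - 1 - 2 * real l)))"
proof -
  define z where "z = real l / real n"
  have "real n > 0" "0 < z" "z < 1"
    using assms unfolding z_def by simp_all
  then have a_eq: "(real n - 1) / real n * real l + 1 = real l + 1 - z"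
    "(real n - 1) / real n * real l + 3 = real l + 1 - z + 2"
    unfolding z_def by (simp_all add: field_simps)
  have Gamma_ratio: "Gamma (real l + 1 - z + 2) / Gamma (real l + 1 - z)
      = (real l + 1 - z) * (real l + 1 - z + 1)"
    using \<open>z < 1\<close> nonpos_Ints_nonpos by (intro Gamma_add_two_div_Gamma) fastforce
  have prefactor: "fact (l + 1) * real n ^ (l + 1) / real l ^ (l + 1) = fact (l + 1) / z ^ (l + 1)"
    unfolding z_def by (simp add: power_divide)
  have partial_sum: "(\<Sum>k=0..l. real l ^ k / (fact k * real n ^ k)) = (\<Sum>k\<le>l. z ^ k / fact k)"
    unfolding z_def atLeast0AtMost by (simp add: power_divide mult.commute)
  have exp_term: "real n / real l * ((\<Sum>k\<le>l. z ^ k / fact k) - exp z)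
      = - ((exp z - (\<Sum>k\<le>l. z ^ k / fact k)) / z)"
    using assms unfolding z_def by (simp add: field_simps)
  have last_term: "real l ^ (l - 1) / (fact (l - 1) * real n ^ (l - 1))
      * (1 / ((real n + 1) * (real l + 1) - 1 - 2 * real l)) = z ^ l / (fact l * (real l + 1 - z))"
    unfolding z_def using assms by (intro power_div_fact_boundary_term_eq) simp_all
  have "hypergeometric [(real n - 1) / real n * real l + 1, 1]
                        [real l + 2, (real n - 1) / real n * real l + 3] (real l / real n)
      = hypergeometric [real l + 1 - z, 1] [real l + 2, real l + 1 - z + 2] z"
    unfolding a_eq z_def ..
  also have "\<dots> = (real l + 1 - z) * (real l + 1 - z + 1) * fact (l + 1) / z ^ (l + 1)
         * (z ^ l / (fact l * (real l + 1 - z)) - (exp z - (\<Sum>k\<le>l. z ^ k / fact k)) / z)"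
    using \<open>0 < z\<close> \<open>z < 1\<close> by (intro hypergeometric_2F2_closed_form) simp_all
  finally show ?thesis
    unfolding a_eq Gamma_ratio prefactor partial_sum last_term z_def[symmetric] exp_term
    by (simp add: ac_simps)
qed

end
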